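(* Let $d\ge 2$ and let $\varphi:[0,\infty)\to[0,1]$ be the Laplace transform of a strictly positive random variable, continuous and strictly decreasing with $\varphi(0)=1$ and $\lim_{t\to\infty}\varphi(t)=0$, and let $C(u_1,\dots,u_d)=\varphi\big(\sum_{i=1}^d\varphi^{-1}(u_i)\big)$ be the associated Archimedean copula. If $\varphi$ is slowly varying at $\infty$, then for every $w=(w_1,\dots,w_d)\in\mathbb{R}_+^d$, $$\lim_{u\downarrow 0}\frac{C(uw_1,\dots,uw_d)}{u}=\min\{w_1,\dots,w_d\}.$$
   Context: A measurable function $f>0$ is slowly varying at $\infty$ if $f(tx)/f(t)\to 1$ as $t\to\infty$ for every $x>0$. *)

theory Defs
  imports "HOL-Probability.Probability"
begin

text \<open>Every real random
  variable can be realised on a probability space over the reals, so the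
  probability space is taken of type real measure.\<close>
definition laplace_transform_pos_rv :: "(real \<Rightarrow> real) \<Rightarrow> bool" where
  "laplace_transform_pos_rv phi \<longleftrightarrow>
     (\<exists>(M::real measure) X. prob_space M \<and> X \<in> borel_measurable M \<and>
        (AE \<omega> in M. X \<omega> > 0) \<and>
        (\<forall>t\<ge>0. phi t = prob_space.expectation M (\<lambda>\<omega>. exp (- t * X \<omega>))))"

definition slowly_varying_at_top :: "(real \<Rightarrow> real) \<Rightarrow> bool" where
  "slowly_varying_at_top f \<longleftrightarrow>
     (\<forall>t\<ge>0. f t > 0) \<and> set_borel_measurable borel {0..} f \<and>
     (\<forall>x>0. ((\<lambda>t. f (t * x) / f t) \<longlongrightarrow> 1) at_top)"

text \<open>Archimedean copula in dimension d with generator phi,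
  C(u_0,...,u_{d-1}) = phi (sum_i phi^{-1}(u_i)), with the standard convention
  phi^{-1}(0) = infinity, phi(infinity) = 0, i.e. C(u) = 0 if some u_i = 0.\<close>
definition archimedean_copula :: "nat \<Rightarrow> (real \<Rightarrow> real) \<Rightarrow> (nat \<Rightarrow> real) \<Rightarrow> real" where
  "archimedean_copula d phi u =
     (if \<exists>i<d. u i = 0 then 0
      else phi (\<Sum>i<d. inv_into {0..} phi (u i)))"

end

theory Submission
  imports Defs
begin

text \<open>Write \<open>\<psi>\<close> for the inverse of the generator and \<open>m = min w\<close>. Since \<open>\<psi>\<close> is decreasing,
  all summands \<open>\<psi>(u w\<^sub>i)\<close> lie between \<open>0\<close> and \<open>\<psi>(u m)\<close>, hence
  \<open>\<phi>(d \<psi>(u m)) \<le> C(u w) \<le> \<phi>(\<psi>(u m)) = u m\<close>. As \<open>u \<down> 0\<close> we have \<open>\<psi>(u m) \<rightarrow> \<infinity>\<close>, and slow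
  variation gives \<open>\<phi>(d \<psi>(u m)) / \<phi>(\<psi>(u m)) \<rightarrow> 1\<close>; the claim follows by squeezing.\<close>

lemma filterlim_mult_right_at_right_0:
  fixes c :: real
  assumes "0 < c"
  shows "filterlim (\<lambda>u. u * c) (at_right 0) (at_right 0)"
  unfolding filterlim_at
  using assms by (auto simp: eventually_at_right_field intro!: exI[of _ 1] tendsto_mult_left_zero tendsto_eq_intros)

lemma eventually_scaled_in_unit_interval:
  fixes w :: "nat \<Rightarrow> real"
  assumes "\<forall>i<d. 0 < w i"
  shows "eventually (\<lambda>u. \<forall>i<d. 0 < u * w i \<and> u * w i \<le> 1) (at_right 0)"
proof -
  have "eventually (\<lambda>u. u * w i \<le> 1) (at_right 0)" for i
  proof -
    have "((\<lambda>u. u * w i) \<longlongrightarrow> 0) (at_right 0)"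
      by (intro tendsto_mult_left_zero tendsto_ident_at)
    then show ?thesis
      by (rule order_tendstoD(2)[where a = 1, THEN eventually_mono]) auto
  qed
  then have "eventually (\<lambda>u. 0 < u \<and> (\<forall>i\<in>{..<d}. u * w i \<le> 1)) (at_right 0)"
    by (intro eventually_conj eventually_at_right_less eventually_ball_finite) auto
  then show ?thesis
    by eventually_elim (use assms in auto)
qed

locale archimedean_generator =
  fixes \<phi> :: "real \<Rightarrow> real"
  assumes continuous: "continuous_on {0..} \<phi>"
    and strict_antimono: "strict_antimono_on {0..} \<phi>"
    and phi_0: "\<phi> 0 = 1"
    and phi_tendsto_at_top: "(\<phi> \<longlongrightarrow> 0) at_top"
begin

abbreviation \<psi> :: "real \<Rightarrow> real" where
  "\<psi> \<equiv> inv_into {0..} \<phi>"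

lemma phi_less: "0 \<le> x \<Longrightarrow> x < y \<Longrightarrow> \<phi> y < \<phi> x"
  using strict_antimono by (auto simp: monotone_on_def)

lemma phi_le: "0 \<le> x \<Longrightarrow> x \<le> y \<Longrightarrow> \<phi> y \<le> \<phi> x"
  using phi_less by (metis order_le_less)

lemma phi_pos:
  assumes "0 \<le> t"
  shows "0 < \<phi> t"
proof -
  have "eventually (\<lambda>s. \<phi> s \<le> \<phi> (t + 1)) at_top"
    using assms by (intro eventually_ge_at_top[THEN eventually_mono]) (auto intro: phi_le)
  then have "0 \<le> \<phi> (t + 1)"
    using phi_tendsto_at_top by (intro tendsto_upperbound) auto
  also have "\<phi> (t + 1) < \<phi> t"
    using assms by (intro phi_less) auto
  finally show ?thesis .
qed

lemma phi_le_one: "0 \<le> t \<Longrightarrow> \<phi> t \<le> 1"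
  using phi_le[of 0 t] phi_0 by simp

lemma
  assumes "0 < v" "v \<le> 1"
  shows psi_nonneg: "0 \<le> \<psi> v" and phi_psi: "\<phi> (\<psi> v) = v"
proof -
  obtain T where "0 \<le> T" "\<phi> T \<le> v"
    using order_tendstoD(2)[OF phi_tendsto_at_top \<open>0 < v\<close>]
    by (metis eventually_at_top_linorder max.cobounded1 max.cobounded2 less_imp_le)
  moreover have "continuous_on {0..T} \<phi>"
    using continuous by (rule continuous_on_subset) auto
  ultimately obtain x where "0 \<le> x" "\<phi> x = v"
    using IVT2'[of \<phi> T v 0] assms phi_0 by auto
  then have "v \<in> \<phi> ` {0..}"
    by auto
  then show "0 \<le> \<psi> v" "\<phi> (\<psi> v) = v"
    by (metis atLeast_iff inv_into_into, rule f_inv_into_f)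
qed

lemma psi_antimono:
  assumes "0 < v" "v \<le> v'" "v' \<le> 1"
  shows "\<psi> v' \<le> \<psi> v"
proof (rule ccontr)
  assume "\<not> ?thesis"
  then have "\<phi> (\<psi> v') < \<phi> (\<psi> v)"
    using assms by (intro phi_less psi_nonneg) auto
  with assms show False
    by (simp add: phi_psi)
qed

lemma filterlim_psi_at_right_0: "filterlim \<psi> at_top (at_right 0)"
  unfolding filterlim_at_top eventually_at_right_field
proof (intro allI exI conjI ballI impI)
  fix Z :: real and v :: real
  define K where "K = max Z 0"
  show "0 < \<phi> K"
    by (simp add: K_def phi_pos)
  assume v: "0 < v" "v < \<phi> K"
  then have "v \<le> 1"
    using phi_le_one[of K] by (simp add: K_def)
  have "K < \<psi> v"
  proof (rule ccontr)
    assume "\<not> K < \<psi> v"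
    then have "\<phi> K \<le> \<phi> (\<psi> v)"
      using v \<open>v \<le> 1\<close> by (intro phi_le psi_nonneg) auto
    with v \<open>v \<le> 1\<close> show False
      by (simp add: phi_psi)
  qed
  then show "Z \<le> \<psi> v"
    by (simp add: K_def)
qed

lemma tendsto_phi_psi_scaled_over:
  assumes "((\<lambda>t. \<phi> (t * x) / \<phi> t) \<longlongrightarrow> 1) at_top"
  shows "((\<lambda>v. \<phi> (\<psi> v * x) / v) \<longlongrightarrow> 1) (at_right 0)"
proof -
  have "eventually (\<lambda>v. \<phi> (\<psi> v * x) / \<phi> (\<psi> v) = \<phi> (\<psi> v * x) / v) (at_right 0)"
    unfolding eventually_at_right_field by (intro exI[of _ 1]) (auto simp: phi_psi)
  with filterlim_compose[OF assms filterlim_psi_at_right_0] show ?thesis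
    by (rule Lim_transform_eventually)
qed

lemma archimedean_copula_le_coordinate:
  assumes "j < d" and "\<forall>i<d. 0 < u i \<and> u i \<le> 1"
  shows "archimedean_copula d \<phi> u \<le> u j"
proof -
  have "\<psi> (u j) \<le> (\<Sum>i<d. \<psi> (u i))"
    using assms by (intro member_le_sum) (auto intro: psi_nonneg)
  then have "\<phi> (\<Sum>i<d. \<psi> (u i)) \<le> \<phi> (\<psi> (u j))"
    using assms by (intro phi_le psi_nonneg) auto
  with assms show ?thesis
    by (auto simp: archimedean_copula_def phi_psi)
qed

lemma archimedean_copula_ge_min:
  assumes "j < d" and "\<forall>i<d. 0 < u i \<and> u i \<le> 1" and "\<forall>i<d. u j \<le> u i"
  shows "\<phi> (\<psi> (u j) * real d) \<le> archimedean_copula d \<phi> u"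
proof -
  have "(\<Sum>i<d. \<psi> (u i)) \<le> real (card {..<d}) * \<psi> (u j)"
    using assms by (intro sum_bounded_above psi_antimono) auto
  then have "\<phi> (\<psi> (u j) * real d) \<le> \<phi> (\<Sum>i<d. \<psi> (u i))"
    using assms by (intro phi_le sum_nonneg psi_nonneg) (auto simp: mult.commute)
  with assms show ?thesis
    by (auto simp: archimedean_copula_def)
qed

lemma tendsto_archimedean_copula_scaled:
  assumes slowly_varying: "((\<lambda>t. \<phi> (t * real d) / \<phi> t) \<longlongrightarrow> 1) at_top"
    and "j < d" and w_pos: "\<forall>i<d. 0 < w i" and w_min: "\<forall>i<d. w j \<le> w i"
  shows "((\<lambda>u. archimedean_copula d \<phi> (\<lambda>i. u * w i) / u) \<longlongrightarrow> w j) (at_right 0)"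
proof -
  let ?C = "\<lambda>u. archimedean_copula d \<phi> (\<lambda>i. u * w i) / u"
  let ?L = "\<lambda>u. w j * (\<phi> (\<psi> (u * w j) * real d) / (u * w j))"
  have "0 < w j"
    using w_pos \<open>j < d\<close> by simp
  have small: "eventually (\<lambda>u. 0 < u \<and> (\<forall>i<d. 0 < u * w i \<and> u * w i \<le> 1)) (at_right 0)"
    using eventually_scaled_in_unit_interval[OF w_pos] eventually_at_right_less
    by eventually_elim simp
  have "eventually (\<lambda>u. ?L u \<le> ?C u \<and> ?C u \<le> w j) (at_right 0)"
    using small
  proof eventually_elim
    case (elim u)
    with assms have "\<phi> (\<psi> (u * w j) * real d) \<le> archimedean_copula d \<phi> (\<lambda>i. u * w i)"
      by (intro archimedean_copula_ge_min) (auto simp: mult_left_mono)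
    moreover have "archimedean_copula d \<phi> (\<lambda>i. u * w i) \<le> u * w j"
      using elim \<open>j < d\<close> by (intro archimedean_copula_le_coordinate) auto
    moreover have "?L u = \<phi> (\<psi> (u * w j) * real d) / u"
      using elim \<open>0 < w j\<close> by simp
    ultimately show ?case
      using elim by (simp add: divide_right_mono divide_le_eq mult.commute)
  qed
  moreover from filterlim_compose[OF tendsto_phi_psi_scaled_over[OF slowly_varying]
      filterlim_mult_right_at_right_0[OF \<open>0 < w j\<close>]]
  have "(?L \<longlongrightarrow> w j * 1) (at_right 0)"
    by (rule tendsto_mult_left)
  ultimately show ?thesis
    using tendsto_sandwich[of ?L ?C _ "\<lambda>_. w j"] by (simp add: eventually_conj_iff)
qed

end

lemma archimedean_copula_zero_coordinate:
  "j < d \<Longrightarrow> u j = 0 \<Longrightarrow> archimedean_copula d \<phi> u = 0"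
  by (auto simp: archimedean_copula_def)

theorem theorem2p3:
  fixes d :: nat and phi :: "real \<Rightarrow> real" and w :: "nat \<Rightarrow> real"
  assumes "d \<ge> 2"
    and "laplace_transform_pos_rv phi"
    and "continuous_on {0..} phi"
    and "strict_antimono_on {0..} phi"
    and "phi 0 = 1"
    and "(phi \<longlongrightarrow> 0) at_top"
    and "\<forall>t\<ge>0. phi t \<in> {0..1}"
    and "slowly_varying_at_top phi"
    and "\<forall>i<d. w i \<ge> 0"
  shows "((\<lambda>u. archimedean_copula d phi (\<lambda>i. u * w i) / u)
           \<longlongrightarrow> Min (w ` {..<d})) (at_right 0)"
proof -
  interpret archimedean_generator phi
    using assms(3-6) by unfold_locales
  have "Min (w ` {..<d}) \<in> w ` {..<d}"
    using assms(1) by (intro Min_in) (auto simp: lessThan_empty_iff)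
  then obtain j where j: "j < d" "w j = Min (w ` {..<d})"
    by (metis imageE lessThan_iff)
  then have w_min: "\<forall>i<d. w j \<le> w i"
    by simp
  show ?thesis
  proof (cases "w j = 0")
    case True
    then have "(\<lambda>u. archimedean_copula d phi (\<lambda>i. u * w i) / u) = (\<lambda>_. 0)"
      using archimedean_copula_zero_coordinate[OF \<open>j < d\<close>] by simp
    with True show ?thesis
      by (simp flip: j(2))
  next
    case False
    with assms(9) j(1) w_min have "\<forall>i<d. 0 < w i"
      by (metis less_le less_le_trans)
    moreover have "((\<lambda>t. phi (t * real d) / phi t) \<longlongrightarrow> 1) at_top"
      using assms(1,8) unfolding slowly_varying_at_top_def by auto
    ultimately show ?thesis
      unfolding j(2)[symmetric] using j(1) w_min by (intro tendsto_archimedean_copula_scaled)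
  qed
qed

end
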